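(* Let $m$ and $n$ be positive integers. Then $$\binom{m+n-2}{m-1}\binom{n}{m}\binom{2n}{n}\equiv 0\pmod{m+n}.$$
   Context: Binomial coefficients $\binom{a}{b}$ are zero when $b<0$ or $b>a$ (for nonnegative integer $a$). *)

theory Defs
  imports Main
begin

end

theory Submission
  imports Defs
begin

text \<open>Write \<open>m = a + 1\<close>, \<open>n = b + 1\<close>, \<open>N = m + n\<close>. Absorption identities turn
  \<open>(N - 1) \<cdot> C(N-2, m-1) \<cdot> C(n, m) \<cdot> C(2n, n)\<close> into \<open>N \<cdot> C(N-1, m-1) \<cdot> C(N-1, m) \<cdot> C(2n, n-m)\<close>,
  so \<open>N\<close> divides \<open>(N - 1)\<close> times the product; as \<open>N - 1\<close> and \<open>N\<close> are coprime, \<open>N\<close> divides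
  the product itself. For \<open>m > n\<close> the product is \<open>0\<close>.\<close>

lemma choose_mult_central_binomial:
  fixes m n :: nat
  assumes "m \<le> n"
  shows "(n choose m) * ((2 * n) choose n) = ((2 * n) choose (n - m)) * ((m + n) choose m)"
proof -
  have "((2 * n) choose n) * (n choose (n - m))
      = ((2 * n) choose (n - m)) * ((2 * n - (n - m)) choose (n - (n - m)))"
    by (rule choose_mult) auto
  moreover have "2 * n - (n - m) = m + n" "n - (n - m) = m" using assms by auto
  moreover have "n choose (n - m) = n choose m"
    using binomial_symmetric[OF assms] by simp
  ultimately show ?thesis by (simp add: mult.commute add.commute)
qed

lemma binomial_product_shift:
  fixes a b :: nat
  assumes "a \<le> b"
  shows "(a + b + 1) * (((a + b) choose a) * (Suc b choose Suc a) * ((2 * Suc b) choose Suc b))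
       = (a + b + 2) * (((a + b + 1) choose a) * ((a + b + 1) choose Suc a) * ((2 * Suc b) choose (b - a)))"
proof -
  have absorb_a: "(a + b + 1) * ((a + b) choose a) = (b + 1) * ((a + b + 1) choose a)"
    using binomial_absorb_comp[of "a + b + 1" a] by simp
  have absorb_b: "(b + 1) * ((a + b + 2) choose Suc a) = (a + b + 2) * ((a + b + 1) choose Suc a)"
    using binomial_absorb_comp[of "a + b + 2" "Suc a"] by simp
  have central: "(Suc b choose Suc a) * ((2 * Suc b) choose Suc b)
      = ((2 * Suc b) choose (b - a)) * ((a + b + 2) choose Suc a)"
    using choose_mult_central_binomial[of "Suc a" "Suc b"] assms by simp
  have "(a + b + 1) * (((a + b) choose a) * (Suc b choose Suc a) * ((2 * Suc b) choose Suc b))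
      = ((a + b + 1) * ((a + b) choose a)) * ((Suc b choose Suc a) * ((2 * Suc b) choose Suc b))"
    by (simp only: ac_simps)
  also have "\<dots> = ((a + b + 1) * ((a + b) choose a)) * ((2 * Suc b) choose (b - a)) * ((a + b + 2) choose Suc a)"
    by (simp only: central mult.assoc)
  also have "\<dots> = ((a + b + 1) choose a) * ((2 * Suc b) choose (b - a)) * ((b + 1) * ((a + b + 2) choose Suc a))"
    unfolding absorb_a by (simp only: ac_simps)
  also have "\<dots> = (a + b + 2) * (((a + b + 1) choose a) * ((a + b + 1) choose Suc a) * ((2 * Suc b) choose (b - a)))"
    unfolding absorb_b by (simp only: ac_simps)
  finally show ?thesis .
qed

theorem theorem2:
  fixes m n :: nat
  assumes "m \<ge> 1" and "n \<ge> 1"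
  shows "(m + n) dvd ((m + n - 2) choose (m - 1)) * (n choose m) * ((2 * n) choose n)"
proof (cases "m \<le> n")
  case False
  then show ?thesis by (simp add: binomial_eq_0)
next
  case True
  obtain a b where ab: "m = Suc a" "n = Suc b" using assms by (metis Suc_le_D One_nat_def)
  with True have "a \<le> b" by simp
  let ?P = "((a + b) choose a) * (Suc b choose Suc a) * ((2 * Suc b) choose Suc b)"
  have "(a + b + 2) dvd (a + b + 1) * ?P"
    using binomial_product_shift[OF \<open>a \<le> b\<close>] by (metis dvd_triv_left)
  moreover have "coprime (a + b + 2) (a + b + 1)"
    using coprime_Suc_left_nat[of "a + b + 1"] by simp
  ultimately have "(a + b + 2) dvd ?P"
    using coprime_dvd_mult_right_iff by blast
  then show ?thesis using ab by simp
qed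

end
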